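(* Let $n\ge 1$ be an integer, $x>0$, and $0<v<nx$. Put $m\equiv\lfloor v/x\rfloor$, $r\equiv v-mx$ and $y\equiv x-r$. Then every vector in the convex hull $\mathrm{Conv}(\Gamma(m,y,r))$ is an optimal solution of \[ \min\; f(\boldsymbol v)\quad\text{s.t.}\quad \boldsymbol v\in\Lambda(v). \]
   Context: For $v>0$, $\Lambda(v)$ is the set of vectors in $\mathbb{R}^n$ with nonnegative coordinates summing to $v$. For $\boldsymbol v=(v_1,\dots,v_n)$, $f(\boldsymbol v)\equiv\sum_{1\le l\le k\le n}\bigl(x-\sum_{i=l}^k v_i\bigr)^+$, where $a^+=\max\{a,0\}$. For integers $0\le m<n$ and reals $y,r\ge0$, let $\Delta_y\equiv\lfloor\frac{n+1}{m+1}\rfloor$ and $\Delta_r\equiv\lfloor\frac{n+1}{m+2}\rfloor$. The set $\Gamma(m,y,r)$ ("duo-equidistant vectors") consists of all $\boldsymbol v=\boldsymbol v_y+\boldsymbol v_r\in\mathbb{R}^n$ where: $\boldsymbol v_y$ has $i$-th coordinate $y$ if $i\in\{\sum_{k=1}^{j}\Delta_{y,k}: 1\le j\le m\}$ and $0$ otherwise, for some integers $\Delta_{y,1},\dots,\Delta_{y,m+1}\in\{\Delta_y,\Delta_y+1\}$ with $\sum_{k=1}^{m+1}\Delta_{y,k}=n+1$; and $\boldsymbol v_r$ has $i$-th coordinate $r$ if $i\in\{\sum_{k=1}^{j}\Delta_{r,k}: 1\le j\le m+1\}$ and $0$ otherwise, for some integers $\Delta_{r,1},\dots,\Delta_{r,m+2}\in\{\Delta_r,\Delta_r+1\}$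 with $\sum_{k=1}^{m+2}\Delta_{r,k}=n+1$. *)

theory Defs
  imports "HOL-Analysis.Analysis"
begin

text \<open>Vectors in R^n are represented as functions nat => real whose coordinates
  1..n are the relevant ones (and which vanish outside {1..n}).\<close>

definition Lambda :: "nat \<Rightarrow> real \<Rightarrow> (nat \<Rightarrow> real) set" where
  "Lambda n v = {w. (\<forall>i\<in>{1..n}. 0 \<le> w i) \<and> (\<forall>i. i \<notin> {1..n} \<longrightarrow> w i = 0)
                    \<and> (\<Sum>i=1..n. w i) = v}"

definition fobj :: "nat \<Rightarrow> real \<Rightarrow> (nat \<Rightarrow> real) \<Rightarrow> real" where
  "fobj n x w = (\<Sum>l=1..n. \<Sum>k=l..n. max (x - (\<Sum>i=l..k. w i)) 0)"

definition spike_vec :: "nat \<Rightarrow> (nat \<Rightarrow> nat) \<Rightarrow> real \<Rightarrow> nat \<Rightarrow> real" where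
  "spike_vec J d c (i::nat) = (if i \<in> {(\<Sum>k=1..j. d k) | j. 1 \<le> j \<and> j \<le> J} then c else 0)"

definition gaps_ok :: "nat \<Rightarrow> nat \<Rightarrow> nat \<Rightarrow> (nat \<Rightarrow> nat) \<Rightarrow> bool" where
  "gaps_ok n N D d \<longleftrightarrow> (\<forall>k\<in>{1..N}. d k = D \<or> d k = D + 1) \<and> (\<Sum>k=1..N. d k) = n + 1"

definition Gamma :: "nat \<Rightarrow> nat \<Rightarrow> real \<Rightarrow> real \<Rightarrow> (nat \<Rightarrow> real) set" where
  "Gamma n m y r = {(\<lambda>i. spike_vec m dy y i + spike_vec (m+1) dr r i) | dy dr.
      gaps_ok n (m+1) ((n+1) div (m+1)) dy \<and> gaps_ok n (m+2) ((n+1) div (m+2)) dr}"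

text \<open>Convex hull, written out explicitly (set of finite convex combinations),
  since nat => real is not a real_vector instance in the library.\<close>
definition conv_hull :: "(nat \<Rightarrow> real) set \<Rightarrow> (nat \<Rightarrow> real) set" where
  "conv_hull S = {w. \<exists>(K::nat) c u. (\<forall>j<K. 0 \<le> c j \<and> u j \<in> S) \<and> (\<Sum>j<K. c j) = 1
                      \<and> w = (\<lambda>i. \<Sum>j<K. c j * u j i)}"

end

(*
  For w in Lambda(v) let S_0 = 0 <= S_1 <= ... <= S_n = v be its prefix sums. Then f(w) is the sum
  over pairs a < b of (x - (S_b - S_a))^+, the length of the interval [S_b - x, S_a]. Integrating
  the number of these intervals containing a point over [-x, (m+1) x] and folding the range modulo x,
  every t in [-x, 0] contributes at least the number of pairs whose prefix sums lie in the same cell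
  of the grid t + x Z. The prefix sums occupy at most m + 2 cells when t < r - x and at most m + 1
  otherwise, and n + 1 objects with p labels form at least L(p) pairs with equal labels, so
  f(w) >= r L(m+2) + y L(m+1). A duo-equidistant vector has prefix sums y k_y(a) + r k_r(a), where
  k_y and k_r count the spikes up to a; the gaps of the spikes make the label classes of k_y and k_r
  as balanced as possible, so the bound is attained, and convexity of f extends this to the hull.
*)
theory Submission
  imports Defs
begin

section \<open>Pairs with equal labels\<close>

definition label_count :: "(nat \<Rightarrow> nat) \<Rightarrow> nat \<Rightarrow> nat \<Rightarrow> nat" where
  "label_count \<kappa> n k = card {a. a \<le> n \<and> \<kappa> a = k}"

definition equal_pairs :: "(nat \<Rightarrow> nat) \<Rightarrow> nat \<Rightarrow> real" where
  "equal_pairs \<kappa> n = (\<Sum>b\<le>n. \<Sum>a<b. if \<kappa> a = \<kappa> b then 1 else 0)"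

(* L(p): the number of equal-label pairs when the p label classes have sizes D and D + 1 only,
   which by convexity of c (c - 1) is the least possible. *)
definition min_equal_pairs :: "nat \<Rightarrow> nat \<Rightarrow> real" where
  "min_equal_pairs n p =
     (let D = (n + 1) div p in real D * (real n + 1) - real p * real D * (real D + 1) / 2)"

lemma sum_indicator_eq_label_count:
  "(\<Sum>a<Suc n. if \<kappa> a = k then 1 else 0 :: real) = real (label_count \<kappa> n k)"
proof -
  have "{a\<in>{..<Suc n}. \<kappa> a = k} = {a. a \<le> n \<and> \<kappa> a = k}" by auto
  then show ?thesis
    by (simp only: sum.inter_filter[symmetric] finite_lessThan) (simp add: label_count_def)
qed

lemma label_count_Suc:
  "label_count \<kappa> (Suc n) k = label_count \<kappa> n k + (if \<kappa> (Suc n) = k then 1 else 0)"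
proof -
  have "{a. a \<le> Suc n \<and> \<kappa> a = k}
      = {a. a \<le> n \<and> \<kappa> a = k} \<union> (if \<kappa> (Suc n) = k then {Suc n} else {})"
    by (auto simp: le_Suc_eq)
  then show ?thesis
    by (simp add: label_count_def)
qed

lemma equal_pairs_Suc:
  "equal_pairs \<kappa> (Suc n) = equal_pairs \<kappa> n + real (label_count \<kappa> n (\<kappa> (Suc n)))"
  by (simp only: equal_pairs_def sum.atMost_Suc sum_indicator_eq_label_count)

lemma equal_pairs_eq_sum_label_count:
  assumes "finite K" and "\<forall>a\<le>n. \<kappa> a \<in> K"
  shows "2 * equal_pairs \<kappa> n
         = (\<Sum>k\<in>K. real (label_count \<kappa> n k) * (real (label_count \<kappa> n k) - 1))"
  using assms(2)
proof (induction n)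
  case 0
  have no_pairs: "real (label_count \<kappa> 0 k) * (real (label_count \<kappa> 0 k) - 1) = 0" for k
  proof -
    have "{a. a \<le> 0 \<and> \<kappa> a = k} = (if \<kappa> 0 = k then {0} else {})" by auto
    then show ?thesis by (simp add: label_count_def)
  qed
  show ?case
    by (simp only: no_pairs) (simp add: equal_pairs_def)
next
  case (Suc n)
  let ?c = "\<lambda>n k. real (label_count \<kappa> n k)"
  have "(\<Sum>k\<in>K. ?c (Suc n) k * (?c (Suc n) k - 1))
      = (\<Sum>k\<in>K. ?c n k * (?c n k - 1) + (if \<kappa> (Suc n) = k then 2 * ?c n k else 0))"
    by (intro sum.cong) (auto simp: label_count_Suc algebra_simps)
  also have "\<dots> = (\<Sum>k\<in>K. ?c n k * (?c n k - 1)) + 2 * ?c n (\<kappa> (Suc n))"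
    using Suc.prems assms(1) by (simp add: sum.distrib)
  finally show ?case
    using Suc by (simp add: equal_pairs_Suc)
qed

lemma sum_label_count:
  assumes "finite K" and "\<forall>a\<le>n. \<kappa> a \<in> K"
  shows "(\<Sum>k\<in>K. real (label_count \<kappa> n k)) = real n + 1"
proof -
  have "(\<Sum>k\<in>K. real (label_count \<kappa> n k)) = (\<Sum>a<Suc n. \<Sum>k\<in>K. if \<kappa> a = k then 1 else 0 :: real)"
    by (simp add: sum_indicator_eq_label_count[symmetric] sum.swap[of _ K])
  also have "\<dots> = (\<Sum>a<Suc n. 1)"
    using assms by (intro sum.cong) (auto simp: sum.delta')
  finally show ?thesis by simp
qed

lemma pairs_ge_tangent: "2 * real D * real c - real D * (real D + 1) \<le> real c * (real c - 1)"
proof -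
  have "0 \<le> (real c - real D) * (real c - real D - 1)"
    by (cases "c \<le> D") (auto intro: mult_nonpos_nonpos mult_nonneg_nonneg)
  then show ?thesis by (simp add: algebra_simps)
qed

lemma pairs_eq_tangent:
  "c = D \<or> c = D + 1 \<Longrightarrow> real c * (real c - 1) = 2 * real D * real c - real D * (real D + 1)"
  by (auto simp: algebra_simps)

lemma equal_pairs_ge:
  assumes "\<forall>a\<le>n. \<kappa> a < p"
  shows "2 * real D * (real n + 1) - real p * real D * (real D + 1) \<le> 2 * equal_pairs \<kappa> n"
proof -
  have K: "\<forall>a\<le>n. \<kappa> a \<in> {..<p}" using assms by auto
  have "2 * real D * (real n + 1) - real p * real D * (real D + 1)
      = (\<Sum>k<p. 2 * real D * real (label_count \<kappa> n k) - real D * (real D + 1))"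
    using sum_label_count[OF _ K] by (simp add: sum_subtractf sum_distrib_left[symmetric])
  also have "\<dots> \<le> (\<Sum>k<p. real (label_count \<kappa> n k) * (real (label_count \<kappa> n k) - 1))"
    by (intro sum_mono pairs_ge_tangent)
  also have "\<dots> = 2 * equal_pairs \<kappa> n"
    using equal_pairs_eq_sum_label_count[OF _ K] by simp
  finally show ?thesis .
qed

lemma min_equal_pairs_le:
  assumes "\<forall>a\<le>n. \<kappa> a < p"
  shows "min_equal_pairs n p \<le> equal_pairs \<kappa> n"
  using equal_pairs_ge[OF assms, of "(n + 1) div p"] by (simp add: min_equal_pairs_def Let_def)

section \<open>The lower bound\<close>

lemma integrable_indicator_interval:
  "(indicator {p..q} :: real \<Rightarrow> real) integrable_on {c..d}"
  unfolding indicator_def of_bool_def integrable_restrict_Int Int_atLeastAtMost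
  by (rule integrable_const_ivl)

lemma integral_indicator_interval:
  assumes "c \<le> p" and "q \<le> d"
  shows "integral {c..d} (indicator {p..q} :: real \<Rightarrow> real) = max (q - p) 0"
proof -
  have "{p..q} \<inter> {c..d} = {p..q}" using assms by auto
  then have "integral {c..d} (indicator {p..q} :: real \<Rightarrow> real) = integral {p..q} (\<lambda>_. 1::real)"
    unfolding indicator_def of_bool_def integral_restrict_Int by (simp only:)
  then show ?thesis
    by (cases "p \<le> q") auto
qed

lemma integral_eq_sum_shifts:
  fixes g :: "real \<Rightarrow> real"
  assumes "g integrable_on {c..c + real K * h}" and "h \<ge> 0"
  shows "integral {c..c + real K * h} g = (\<Sum>k<K. integral {c..c + h} (\<lambda>t. g (t + real k * h)))"
  using assms(1)
proof (induction K)
  case (Suc K)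
  have le: "c \<le> c + real K * h" "c + real K * h \<le> c + real (Suc K) * h"
    using assms(2) by (auto simp: algebra_simps)
  have "g integrable_on {c..c + real K * h}"
    using integrable_subinterval_real[OF Suc.prems] le by auto
  moreover have "integral {c + real K * h..c + real (Suc K) * h} g
               = integral {c..c + h} (\<lambda>t. g (t + real K * h))"
    using integral_shift_real_ivl[where f=g and a="c + real K * h" and b="c + real (Suc K) * h"
                                 and c="real K * h"]
    by (simp add: algebra_simps)
  ultimately show ?case
    using Suc.IH Henstock_Kurzweil_Integration.integral_combine[OF le Suc.prems] by simp
qed simp

lemma integral_fold_shifts:
  fixes g :: "real \<Rightarrow> real"
  assumes "\<And>a b. g integrable_on {a..b}" and "h \<ge> 0"
  shows "integral {c..c + real K * h} g = integral {c..c + h} (\<lambda>t. \<Sum>k<K. g (t + real k * h))"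
proof -
  have "(\<lambda>t. g (t + real k * h)) integrable_on {c..c + h}" for k
    using integrable_shift_real_ivl[OF assms(1)[of "c + real k * h" "c + h + real k * h"], of "real k * h"]
    by simp
  then show ?thesis
    using integral_eq_sum_shifts[OF assms] by (simp add: integral_sum)
qed

lemma integral_ge_const:
  fixes F :: "real \<Rightarrow> real"
  assumes "F integrable_on {a..b}" and "a \<le> b" and "\<And>t. t \<in> {a<..<b} \<Longrightarrow> c \<le> F t"
  shows "(b - a) * c \<le> integral {a..b} F"
proof -
  have "(b - a) * c = integral {a<..<b} (\<lambda>_. c)"
    using integral_open_interval_real[of a b "\<lambda>_. c"] assms(2) by simp
  also have "\<dots> \<le> integral {a<..<b} F"
    using assms by (intro integral_le) (auto simp: integrable_on_open_interval_real)
  also have "\<dots> = integral {a..b} F"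
    by (rule integral_open_interval_real[symmetric])
  finally show ?thesis .
qed

lemma integrable_shift_sum:
  fixes g :: "real \<Rightarrow> real"
  assumes "\<And>a b. g integrable_on {a..b}"
  shows "(\<lambda>t. \<Sum>k<K. g (t + real k * h)) integrable_on {a..b}"
proof -
  have "(\<lambda>t. g (t + real k * h)) integrable_on {a..b}" for k
    using integrable_shift_real_ivl[OF assms[of "a + real k * h" "b + real k * h"], of "real k * h"]
    by simp
  then show ?thesis by (intro integrable_sum) auto
qed

(* The index k of the cell [t + k x, t + (k + 1) x) containing s; meaningful only for t <= s. *)
definition grid_cell :: "real \<Rightarrow> real \<Rightarrow> real \<Rightarrow> nat" where
  "grid_cell x t s = nat \<lfloor>(s - t) / x\<rfloor>"

lemma grid_cell_bounds:
  assumes "x > 0" and "t \<le> s"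
  shows "t + real (grid_cell x t s) * x \<le> s" and "s < t + (real (grid_cell x t s) + 1) * x"
proof -
  have nonneg: "0 \<le> (s - t) / x" using assms by simp
  then have "real (grid_cell x t s) \<le> (s - t) / x"
    unfolding grid_cell_def by (rule of_nat_floor)
  then show "t + real (grid_cell x t s) * x \<le> s"
    using assms(1) by (simp add: field_simps)
  have "real (grid_cell x t s) = of_int \<lfloor>(s - t) / x\<rfloor>"
    using nonneg by (simp add: grid_cell_def)
  then have "(s - t) / x < real (grid_cell x t s) + 1"
    using real_of_int_floor_add_one_gt by simp
  then show "s < t + (real (grid_cell x t s) + 1) * x"
    using assms(1) by (simp add: field_simps)
qed

lemma grid_cell_less:
  assumes "x > 0" and "t \<le> s" and "s < t + real M * x"
  shows "grid_cell x t s < M"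
proof -
  have "t + real (grid_cell x t s) * x < t + real M * x"
    using grid_cell_bounds(1)[OF assms(1,2)] assms(3) by linarith
  then show ?thesis using assms(1) by simp
qed

definition overlap_count :: "real \<Rightarrow> (nat \<Rightarrow> real) \<Rightarrow> nat \<Rightarrow> real \<Rightarrow> real" where
  "overlap_count x S n t = (\<Sum>b\<le>n. \<Sum>a<b. indicator {S b - x..S a} t)"

lemma integrable_overlap_count: "overlap_count x S n integrable_on {c..d}"
  unfolding overlap_count_def[abs_def]
  by (intro integrable_sum finite_atMost finite_lessThan integrable_indicator_interval)

lemma sum_pair_gaps_eq_integral_overlap_count:
  assumes "\<forall>a\<le>n. 0 \<le> S a \<and> S a \<le> E"
  shows "(\<Sum>b\<le>n. \<Sum>a<b. max (x - (S b - S a)) 0) = integral {-x..E} (overlap_count x S n)"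
proof -
  have "integral {-x..E} (overlap_count x S n)
      = (\<Sum>b\<le>n. \<Sum>a<b. integral {-x..E} (indicator {S b - x..S a} :: real \<Rightarrow> real))"
    unfolding overlap_count_def[abs_def]
    by (simp add: integral_sum integrable_sum integrable_indicator_interval)
  also have "\<dots> = (\<Sum>b\<le>n. \<Sum>a<b. max (x - (S b - S a)) 0)"
    using assms by (intro sum.cong refl, subst integral_indicator_interval) auto
  finally show ?thesis ..
qed

lemma equal_pairs_le_overlap_shifts:
  assumes "x > 0" and mono: "\<And>a b. a \<le> b \<Longrightarrow> b \<le> n \<Longrightarrow> S a \<le> S b"
    and "\<forall>a\<le>n. t \<le> S a" and "\<forall>a\<le>n. grid_cell x t (S a) < K"
  shows "equal_pairs (\<lambda>a. grid_cell x t (S a)) n \<le> (\<Sum>k<K. overlap_count x S n (t + real k * x))"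
proof -
  let ?\<kappa> = "\<lambda>a. grid_cell x t (S a)"
  have "(if ?\<kappa> a = ?\<kappa> b then 1 else 0) \<le> (\<Sum>k<K. indicator {S b - x..S a} (t + real k * x) :: real)"
    if "b \<le> n" and "a < b" for a b
  proof (cases "?\<kappa> a = ?\<kappa> b")
    case True
    have "t + real (?\<kappa> a) * x \<le> S a" "S b < t + (real (?\<kappa> a) + 1) * x"
      using grid_cell_bounds[OF assms(1)] True assms(3) that by (metis less_imp_le order.trans)+
    then have "indicator {S b - x..S a} (t + real (?\<kappa> a) * x) = (1::real)"
      by (simp add: algebra_simps)
    moreover have "indicator {S b - x..S a} (t + real (?\<kappa> a) * x)
        \<le> (\<Sum>k<K. indicator {S b - x..S a} (t + real k * x) :: real)"
      using assms(4) that by (intro member_le_sum) auto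
    ultimately show ?thesis
      using True by simp
  qed (simp add: sum_nonneg)
  then have "equal_pairs ?\<kappa> n \<le> (\<Sum>b\<le>n. \<Sum>a<b. \<Sum>k<K. indicator {S b - x..S a} (t + real k * x))"
    unfolding equal_pairs_def by (intro sum_mono) auto
  also have "\<dots> = (\<Sum>k<K. overlap_count x S n (t + real k * x))"
    unfolding overlap_count_def by (simp add: sum.swap[of _ "{..<K}"])
  finally show ?thesis .
qed

lemma min_equal_pairs_le_overlap_shifts:
  assumes "x > 0" and mono: "\<And>a b. a \<le> b \<Longrightarrow> b \<le> n \<Longrightarrow> S a \<le> S b"
    and "\<forall>a\<le>n. t \<le> S a \<and> S a < t + real p * x" and "p \<le> K"
  shows "min_equal_pairs n p \<le> (\<Sum>k<K. overlap_count x S n (t + real k * x))"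
proof -
  have cells: "\<forall>a\<le>n. grid_cell x t (S a) < p"
    using assms(3) grid_cell_less[OF assms(1)] by blast
  have "min_equal_pairs n p \<le> equal_pairs (\<lambda>a. grid_cell x t (S a)) n"
    using cells by (rule min_equal_pairs_le)
  also have "\<dots> \<le> (\<Sum>k<K. overlap_count x S n (t + real k * x))"
    using cells assms(3,4) by (intro equal_pairs_le_overlap_shifts[OF assms(1) mono]) auto
  finally show ?thesis .
qed

lemma min_equal_pairs_le_integral_overlap_shifts:
  assumes "x > 0" and mono: "\<And>a b. a \<le> b \<Longrightarrow> b \<le> n \<Longrightarrow> S a \<le> S b"
    and "\<alpha> \<le> \<beta>" and "p \<le> K"
    and "\<And>t. t \<in> {\<alpha><..<\<beta>} \<Longrightarrow> \<forall>a\<le>n. t \<le> S a \<and> S a < t + real p * x"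
  shows "(\<beta> - \<alpha>) * min_equal_pairs n p
         \<le> integral {\<alpha>..\<beta>} (\<lambda>t. \<Sum>k<K. overlap_count x S n (t + real k * x))"
  using assms(3,5)
  by (intro integral_ge_const integrable_shift_sum integrable_overlap_count
            min_equal_pairs_le_overlap_shifts[OF assms(1) mono _ assms(4)])

lemma pair_gaps_lower_bound:
  fixes S :: "nat \<Rightarrow> real"
  assumes "x > 0" and mono: "\<And>a b. a \<le> b \<Longrightarrow> b \<le> n \<Longrightarrow> S a \<le> S b"
    and "S 0 = 0" and "S n = v" and "real m * x \<le> v" and "v < (real m + 1) * x"
  defines "r \<equiv> v - real m * x"
  shows "(x - r) * min_equal_pairs n (m + 1) + r * min_equal_pairs n (m + 2)
         \<le> (\<Sum>b\<le>n. \<Sum>a<b. max (x - (S b - S a)) 0)"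
proof -
  have range: "\<forall>a\<le>n. 0 \<le> S a \<and> S a \<le> v"
    using mono[of 0] mono[of _ n] assms(3,4) by simp
  have r: "0 \<le> r" "r < x"
    using assms(5,6) by (simp_all add: r_def algebra_simps)
  define F where "F t = (\<Sum>k<m + 2. overlap_count x S n (t + real k * x))" for t
  have "(\<Sum>b\<le>n. \<Sum>a<b. max (x - (S b - S a)) 0)
      = integral {-x..-x + real (m + 2) * x} (overlap_count x S n)"
    using range assms(6)
    by (intro sum_pair_gaps_eq_integral_overlap_count) (auto simp: algebra_simps)
  also have "\<dots> = integral {-x..0} F"
    unfolding F_def using integral_fold_shifts[OF integrable_overlap_count, of x "-x" "m + 2"] assms(1)
    by simp
  also have "\<dots> = integral {-x..r - x} F + integral {r - x..0} F"
    unfolding F_def using r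
    by (intro Henstock_Kurzweil_Integration.integral_combine[symmetric]
              integrable_shift_sum integrable_overlap_count) auto
  finally have split: "(\<Sum>b\<le>n. \<Sum>a<b. max (x - (S b - S a)) 0)
      = integral {-x..r - x} F + integral {r - x..0} F" .
  have "(r - x - -x) * min_equal_pairs n (m + 2) \<le> integral {-x..r - x} F"
    unfolding F_def using range r assms(6)
    by (intro min_equal_pairs_le_integral_overlap_shifts[OF assms(1) mono])
       (auto simp: algebra_simps)
  moreover have "(0 - (r - x)) * min_equal_pairs n (m + 1) \<le> integral {r - x..0} F"
    unfolding F_def using range r
    by (intro min_equal_pairs_le_integral_overlap_shifts[OF assms(1) mono])
       (auto simp: r_def algebra_simps)
  ultimately show ?thesis
    using split by simp
qed

definition prefix_sum :: "(nat \<Rightarrow> real) \<Rightarrow> nat \<Rightarrow> real" where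
  "prefix_sum w a = (\<Sum>i=1..a. w i)"

lemma prefix_sum_diff: "a \<le> b \<Longrightarrow> (\<Sum>i=Suc a..b. w i) = prefix_sum w b - prefix_sum w a"
  using sum.ub_add_nat[of 1 a w "b - a"] by (simp add: prefix_sum_def)

lemma fobj_eq_pair_gaps:
  "fobj n x w = (\<Sum>b\<le>n. \<Sum>a<b. max (x - (prefix_sum w b - prefix_sum w a)) 0)"
proof -
  have "fobj n x w = (\<Sum>a<n. \<Sum>b=Suc a..n. max (x - (\<Sum>i=Suc a..b. w i)) 0)"
    unfolding fobj_def by (simp add: sum.atLeast1_atMost_eq)
  also have "\<dots> = (\<Sum>b\<le>n. \<Sum>a<b. max (x - (\<Sum>i=Suc a..b. w i)) 0)"
    by (rule sum.nested_swap'[symmetric])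
  also have "\<dots> = (\<Sum>b\<le>n. \<Sum>a<b. max (x - (prefix_sum w b - prefix_sum w a)) 0)"
    by (intro sum.cong refl) (simp add: prefix_sum_diff)
  finally show ?thesis .
qed

lemma prefix_sum_mono:
  assumes "w \<in> Lambda n v" and "a \<le> b" and "b \<le> n"
  shows "prefix_sum w a \<le> prefix_sum w b"
proof -
  have "0 \<le> (\<Sum>i=Suc a..b. w i)"
    using assms by (intro sum_nonneg) (auto simp: Lambda_def)
  then show ?thesis
    using prefix_sum_diff[OF assms(2)] by simp
qed

lemma fobj_lower_bound:
  assumes "x > 0" and "real m * x \<le> v" and "v < (real m + 1) * x" and "w \<in> Lambda n v"
  defines "r \<equiv> v - real m * x"
  shows "(x - r) * min_equal_pairs n (m + 1) + r * min_equal_pairs n (m + 2) \<le> fobj n x w"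
  unfolding fobj_eq_pair_gaps r_def
proof (rule pair_gaps_lower_bound[OF assms(1) prefix_sum_mono[OF assms(4)] _ _ assms(2,3)])
  show "prefix_sum w n = v"
    using assms(4) by (simp add: Lambda_def prefix_sum_def)
qed (simp_all add: prefix_sum_def)

section \<open>Duo-equidistant vectors attain the bound\<close>

definition spike_pos :: "(nat \<Rightarrow> nat) \<Rightarrow> nat \<Rightarrow> nat" where
  "spike_pos d j = (\<Sum>k=1..j. d k)"

definition spikes_upto :: "nat \<Rightarrow> (nat \<Rightarrow> nat) \<Rightarrow> nat \<Rightarrow> nat" where
  "spikes_upto J d a = card {j\<in>{1..J}. spike_pos d j \<le> a}"

lemma spike_pos_Suc: "spike_pos d (Suc j) = spike_pos d j + d (Suc j)"
  by (simp add: spike_pos_def)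

lemma spike_pos_strict_mono:
  assumes "\<forall>k\<in>{1..N}. 1 \<le> d k" and "i < j" and "j \<le> N"
  shows "spike_pos d i < spike_pos d j"
  using assms(2,3)
proof (induction j)
  case (Suc j)
  then have "1 \<le> d (Suc j)"
    using assms(1) by auto
  then have "spike_pos d j < spike_pos d (Suc j)"
    by (simp add: spike_pos_Suc)
  then show ?case
    using Suc by (cases "i < j") (auto simp: less_Suc_eq)
qed simp

lemma spike_pos_mono:
  assumes "\<forall>k\<in>{1..N}. 1 \<le> d k" and "i \<le> j" and "j \<le> N"
  shows "spike_pos d i \<le> spike_pos d j"
  using spike_pos_strict_mono[OF assms(1) _ assms(3), of i] assms(2) by (cases "i = j") auto

lemma gaps_okD:
  assumes "gaps_ok n (J + 1) ((n + 1) div (J + 1)) d" and "J \<le> n"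
  shows "\<forall>k\<in>{1..J+1}. 1 \<le> d k" and "spike_pos d (J + 1) = n + 1"
proof -
  have "1 \<le> (n + 1) div (J + 1)"
    using assms(2) by (simp add: Suc_le_eq div_greater_zero_iff)
  then show "\<forall>k\<in>{1..J+1}. 1 \<le> d k" and "spike_pos d (J + 1) = n + 1"
    using assms(1) unfolding gaps_ok_def spike_pos_def by force+
qed

lemma prefix_sum_spike_vec:
  assumes "\<forall>k\<in>{1..J}. 1 \<le> d k"
  shows "prefix_sum (spike_vec J d c) a = c * real (spikes_upto J d a)"
proof -
  let ?P = "spike_pos d ` {1..J}"
  have "{(\<Sum>k=1..j. d k) | j. 1 \<le> j \<and> j \<le> J} = ?P"
    by (auto simp: spike_pos_def)
  then have "spike_vec J d c = (\<lambda>i. if i \<in> ?P then c else 0)"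
    unfolding spike_vec_def by simp
  then have "prefix_sum (spike_vec J d c) a = c * real (card ({1..a} \<inter> ?P))"
    by (simp add: prefix_sum_def sum.If_cases Int_commute)
  also have "{1..a} \<inter> ?P = spike_pos d ` {j\<in>{1..J}. spike_pos d j \<le> a}"
  proof -
    have "1 \<le> spike_pos d j" if "j \<in> {1..J}" for j
      using spike_pos_strict_mono[OF assms, of 0 j] that by (simp add: spike_pos_def)
    then show ?thesis by auto
  qed
  also have inj: "inj_on (spike_pos d) {1..J}"
  proof (rule inj_onI)
    fix i j assume "i \<in> {1..J}" "j \<in> {1..J}" "spike_pos d i = spike_pos d j"
    then show "i = j"
      using spike_pos_strict_mono[OF assms, of i j] spike_pos_strict_mono[OF assms, of j i]
      by (cases i j rule: linorder_cases) auto
  qed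
  have "card (spike_pos d ` {j\<in>{1..J}. spike_pos d j \<le> a}) = spikes_upto J d a"
    unfolding spikes_upto_def by (rule card_image[OF inj_on_subset[OF inj]]) blast
  finally show ?thesis .
qed

lemma spikes_upto_le: "spikes_upto J d a \<le> J"
proof -
  have "spikes_upto J d a \<le> card {1..J}"
    unfolding spikes_upto_def by (rule card_mono) auto
  then show ?thesis by simp
qed

lemma spikes_upto_mono: "a \<le> b \<Longrightarrow> spikes_upto J d a \<le> spikes_upto J d b"
  unfolding spikes_upto_def by (rule card_mono) auto

lemma spikes_upto_eq:
  assumes "\<forall>k\<in>{1..J+1}. 1 \<le> d k" and "k \<le> J"
    and "spike_pos d k \<le> a" and "a < spike_pos d (k + 1)"
  shows "spikes_upto J d a = k"
proof -
  have "{j\<in>{1..J}. spike_pos d j \<le> a} = {1..k}"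
  proof (intro set_eqI iffI)
    fix j assume j: "j \<in> {j\<in>{1..J}. spike_pos d j \<le> a}"
    have "\<not> k + 1 \<le> j"
      using spike_pos_mono[OF assms(1), of "k + 1" j] j assms(4) by auto
    then show "j \<in> {1..k}" using j by auto
  next
    fix j assume "j \<in> {1..k}"
    then show "j \<in> {j\<in>{1..J}. spike_pos d j \<le> a}"
      using spike_pos_mono[OF assms(1), of j k] assms(2,3) by auto
  qed
  then show ?thesis by (simp add: spikes_upto_def)
qed

lemma spike_interval_exists:
  assumes "spike_pos d (J + 1) = n + 1" and "a \<le> n"
  shows "\<exists>k\<le>J. spike_pos d k \<le> a \<and> a < spike_pos d (k + 1)"
proof -
  let ?A = "{j. j \<le> J \<and> spike_pos d j \<le> a}"
  define k where "k = Max ?A"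
  have fin: "finite ?A" by simp
  have "0 \<in> ?A"
    by (simp add: spike_pos_def)
  then have "k \<in> ?A"
    unfolding k_def using fin by (intro Max_in) auto
  then have k: "k \<le> J" "spike_pos d k \<le> a" by auto
  have k_max: "j \<le> k" if "j \<le> J" "spike_pos d j \<le> a" for j
    unfolding k_def using fin that by (intro Max_ge) auto
  have "a < spike_pos d (k + 1)"
  proof (cases "k = J")
    case False
    then show ?thesis using k k_max[of "k + 1"] by fastforce
  qed (use assms in simp)
  then show ?thesis using k by blast
qed

lemma label_count_spikes_upto:
  assumes pos: "\<forall>k\<in>{1..J+1}. 1 \<le> d k" and total: "spike_pos d (J + 1) = n + 1" and "k \<le> J"
  shows "label_count (spikes_upto J d) n k = d (k + 1)"
proof -
  have "{a. a \<le> n \<and> spikes_upto J d a = k} = {spike_pos d k..<spike_pos d (k + 1)}"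
  proof (intro set_eqI iffI)
    fix a assume a: "a \<in> {a. a \<le> n \<and> spikes_upto J d a = k}"
    then obtain k' where "k' \<le> J" "spike_pos d k' \<le> a" "a < spike_pos d (k' + 1)"
      using spike_interval_exists[OF total] by blast
    moreover from this have "spikes_upto J d a = k'"
      by (rule spikes_upto_eq[OF pos])
    ultimately show "a \<in> {spike_pos d k..<spike_pos d (k + 1)}"
      using a by auto
  next
    fix a assume a: "a \<in> {spike_pos d k..<spike_pos d (k + 1)}"
    have "spike_pos d (k + 1) \<le> n + 1"
      using spike_pos_mono[OF pos, of "k + 1" "J + 1"] total assms(3) by simp
    then show "a \<in> {a. a \<le> n \<and> spikes_upto J d a = k}"
      using spikes_upto_eq[OF pos assms(3)] a by auto
  qed
  then show ?thesis
    by (simp add: label_count_def spike_pos_Suc[of d k, simplified])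
qed

lemma equal_pairs_spikes_upto:
  assumes gaps: "gaps_ok n (J + 1) ((n + 1) div (J + 1)) d" and "J \<le> n"
  shows "equal_pairs (spikes_upto J d) n = min_equal_pairs n (J + 1)"
proof -
  define D where "D = (n + 1) div (J + 1)"
  note pos = gaps_okD[OF gaps assms(2)]
  have labels: "\<forall>a\<le>n. spikes_upto J d a \<in> {..<J + 1}"
    using spikes_upto_le by (auto simp: less_Suc_eq_le)
  have "2 * equal_pairs (spikes_upto J d) n
      = (\<Sum>k<J + 1. real (label_count (spikes_upto J d) n k) * (real (label_count (spikes_upto J d) n k) - 1))"
    by (rule equal_pairs_eq_sum_label_count[OF _ labels]) simp
  also have "\<dots> = (\<Sum>k<J + 1. 2 * real D * real (d (k + 1)) - real D * (real D + 1))"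
  proof (intro sum.cong refl)
    fix k assume k: "k \<in> {..<J + 1}"
    then have "d (k + 1) = D \<or> d (k + 1) = D + 1"
      using gaps by (auto simp: gaps_ok_def D_def)
    then show "real (label_count (spikes_upto J d) n k) * (real (label_count (spikes_upto J d) n k) - 1)
        = 2 * real D * real (d (k + 1)) - real D * (real D + 1)"
      using label_count_spikes_upto[OF pos] k by (simp add: pairs_eq_tangent)
  qed
  also have "(\<Sum>k<J + 1. real (d (k + 1))) = real n + 1"
    using gaps sum.atLeast1_atMost_eq[of "\<lambda>k. real (d k)" "J + 1"]
    by (simp add: gaps_ok_def flip: of_nat_sum)
  then have "(\<Sum>k<J + 1. 2 * real D * real (d (k + 1)) - real D * (real D + 1))
      = 2 * real D * (real n + 1) - real (J + 1) * real D * (real D + 1)"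
    by (simp add: sum_subtractf flip: sum_distrib_left)
  finally show ?thesis
    by (simp add: min_equal_pairs_def Let_def D_def field_simps)
qed

lemma spike_vec_outside:
  assumes pos: "\<forall>k\<in>{1..J+1}. 1 \<le> d k" and total: "spike_pos d (J + 1) = n + 1"
    and "i \<notin> {1..n}"
  shows "spike_vec J d c i = 0"
proof -
  have "spike_pos d j \<in> {1..n}" if "j \<in> {1..J}" for j
    using spike_pos_strict_mono[OF pos, of 0 j] spike_pos_strict_mono[OF pos, of j "J + 1"] that total
    by (auto simp: spike_pos_def)
  then have "i \<notin> {(\<Sum>k=1..j. d k) | j. 1 \<le> j \<and> j \<le> J}"
    using assms(3) by (auto simp: spike_pos_def)
  then show ?thesis
    unfolding spike_vec_def by (rule if_not_P)
qed

lemma spikes_upto_last: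
  assumes pos: "\<forall>k\<in>{1..J+1}. 1 \<le> d k" and total: "spike_pos d (J + 1) = n + 1"
  shows "spikes_upto J d n = J"
  using spikes_upto_eq[OF pos order.refl] spike_pos_strict_mono[OF pos, of J "J + 1"] total
  by simp

lemma gap_penalty_le:
  fixes y r :: real and ia ib ja jb :: nat
  assumes "0 \<le> y" and "0 \<le> r" and "ia \<le> ib" and "ja \<le> jb"
  shows "max (y + r - ((y * real ib + r * real jb) - (y * real ia + r * real ja))) 0
         \<le> y * (if ia = ib then 1 else 0) + r * (if ja = jb then 1 else 0)"
proof -
  have "y * (if ia = ib then 0 else 1) \<le> y * (real ib - real ia)"
    using assms(1,3) by (intro mult_left_mono) auto
  moreover have "r * (if ja = jb then 0 else 1) \<le> r * (real jb - real ja)"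
    using assms(2,4) by (intro mult_left_mono) auto
  ultimately show ?thesis
    using assms(1,2) by (auto simp: algebra_simps split: if_splits)
qed

lemma Gamma_elim:
  assumes "u \<in> Gamma n m y r"
  obtains dy dr where "u = (\<lambda>i. spike_vec m dy y i + spike_vec (m + 1) dr r i)"
    and "gaps_ok n (m + 1) ((n + 1) div (m + 1)) dy"
    and "gaps_ok n (m + 1 + 1) ((n + 1) div (m + 1 + 1)) dr"
  using assms unfolding Gamma_def by (auto simp: numeral_2_eq_2)

lemma prefix_sum_spike_vec_add:
  assumes "gaps_ok n (m + 1) ((n + 1) div (m + 1)) dy"
    and "gaps_ok n (m + 1 + 1) ((n + 1) div (m + 1 + 1)) dr" and "m + 1 \<le> n"
  shows "prefix_sum (\<lambda>i. spike_vec m dy y i + spike_vec (m + 1) dr r i) a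
         = y * real (spikes_upto m dy a) + r * real (spikes_upto (m + 1) dr a)"
  using gaps_okD(1)[OF assms(1)] gaps_okD(1)[OF assms(2)] assms(3)
  by (simp add: prefix_sum_def sum.distrib flip: prefix_sum_spike_vec)

lemma Gamma_subset_Lambda:
  assumes "m + 1 \<le> n" and "0 \<le> y" and "0 \<le> r"
  shows "Gamma n m y r \<subseteq> Lambda n (y * real m + r * real (m + 1))"
proof
  fix u assume "u \<in> Gamma n m y r"
  then obtain dy dr where u: "u = (\<lambda>i. spike_vec m dy y i + spike_vec (m + 1) dr r i)"
    and gy: "gaps_ok n (m + 1) ((n + 1) div (m + 1)) dy"
    and gr: "gaps_ok n (m + 1 + 1) ((n + 1) div (m + 1 + 1)) dr"
    by (rule Gamma_elim)
  have "m \<le> n" using assms(1) by simp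
  note py = gaps_okD[OF gy this] and pr = gaps_okD[OF gr assms(1)]
  have "0 \<le> u i" for i
    using assms(2,3) by (simp add: u spike_vec_def)
  moreover have "u i = 0" if "i \<notin> {1..n}" for i
    using spike_vec_outside[OF py that] spike_vec_outside[OF pr that] by (simp add: u)
  moreover have "prefix_sum u n = y * real m + r * real (m + 1)"
    using prefix_sum_spike_vec_add[OF gy gr assms(1)] spikes_upto_last[OF py] spikes_upto_last[OF pr]
    by (simp add: u)
  ultimately show "u \<in> Lambda n (y * real m + r * real (m + 1))"
    by (simp add: Lambda_def prefix_sum_def)
qed

lemma fobj_Gamma_le:
  assumes "u \<in> Gamma n m y r" and "m + 1 \<le> n" and "0 \<le> y" and "0 \<le> r"
  shows "fobj n (y + r) u \<le> y * min_equal_pairs n (m + 1) + r * min_equal_pairs n (m + 2)"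
proof -
  obtain dy dr where u: "u = (\<lambda>i. spike_vec m dy y i + spike_vec (m + 1) dr r i)"
    and gy: "gaps_ok n (m + 1) ((n + 1) div (m + 1)) dy"
    and gr: "gaps_ok n (m + 1 + 1) ((n + 1) div (m + 1 + 1)) dr"
    using assms(1) by (rule Gamma_elim)
  let ?\<kappa>y = "spikes_upto m dy" and ?\<kappa>r = "spikes_upto (m + 1) dr"
  let ?eq = "\<lambda>\<kappa> a b. if \<kappa> a = (\<kappa> b :: nat) then 1 else 0 :: real"
  have ps: "prefix_sum u a = y * real (?\<kappa>y a) + r * real (?\<kappa>r a)" for a
    unfolding u by (rule prefix_sum_spike_vec_add[OF gy gr assms(2)])
  have "fobj n (y + r) u \<le> (\<Sum>b\<le>n. \<Sum>a<b. y * ?eq ?\<kappa>y a b + r * ?eq ?\<kappa>r a b)"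
    unfolding fobj_eq_pair_gaps ps
    using assms(3,4) by (intro sum_mono gap_penalty_le spikes_upto_mono) auto
  also have "\<dots> = y * equal_pairs ?\<kappa>y n + r * equal_pairs ?\<kappa>r n"
    by (simp add: equal_pairs_def sum.distrib sum_distrib_left)
  also have "\<dots> = y * min_equal_pairs n (m + 1) + r * min_equal_pairs n (m + 2)"
    using equal_pairs_spikes_upto[OF gy] equal_pairs_spikes_upto[OF gr] assms(2)
    by (simp add: numeral_2_eq_2)
  finally show ?thesis .
qed

section \<open>Convex combinations\<close>

lemma max_diff_convex_comb_le:
  fixes c s :: "nat \<Rightarrow> real"
  assumes "\<forall>j<K. 0 \<le> c j" and "(\<Sum>j<K. c j) = 1"
  shows "max (x - (\<Sum>j<K. c j * s j)) 0 \<le> (\<Sum>j<K. c j * max (x - s j) 0)"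
proof -
  have "(\<Sum>j<K. c j * (x - s j)) = (\<Sum>j<K. c j) * x - (\<Sum>j<K. c j * s j)"
    by (simp add: right_diff_distrib sum_subtractf sum_distrib_right)
  then have "x - (\<Sum>j<K. c j * s j) = (\<Sum>j<K. c j * (x - s j))"
    using assms(2) by simp
  also have "\<dots> \<le> (\<Sum>j<K. c j * max (x - s j) 0)"
    using assms(1) by (intro sum_mono mult_left_mono) auto
  moreover have "0 \<le> (\<Sum>j<K. c j * max (x - s j) 0)"
    using assms(1) by (intro sum_nonneg) auto
  ultimately show ?thesis by simp
qed

lemma convex_comb_sum:
  fixes c :: "nat \<Rightarrow> real"
  assumes "(\<Sum>j<K. c j) = 1"
  shows "(\<Sum>j<K. c j * B) = B"
  using assms by (simp flip: sum_distrib_right)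

lemma fobj_convex_comb_le:
  fixes c :: "nat \<Rightarrow> real"
  assumes c: "\<forall>j<K. 0 \<le> c j" and c1: "(\<Sum>j<K. c j) = 1"
  shows "fobj n x (\<lambda>i. \<Sum>j<K. c j * u j i) \<le> (\<Sum>j<K. c j * fobj n x (u j))"
proof -
  have "max (x - (\<Sum>i=l..k. \<Sum>j<K. c j * u j i)) 0
      \<le> (\<Sum>j<K. c j * max (x - (\<Sum>i=l..k. u j i)) 0)" for l k
  proof -
    have "(\<Sum>i=l..k. \<Sum>j<K. c j * u j i) = (\<Sum>j<K. c j * (\<Sum>i=l..k. u j i))"
      by (subst sum.swap) (simp add: sum_distrib_left)
    then show ?thesis
      using max_diff_convex_comb_le[OF c c1] by simp
  qed
  then have "fobj n x (\<lambda>i. \<Sum>j<K. c j * u j i)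
      \<le> (\<Sum>l=1..n. \<Sum>k=l..n. \<Sum>j<K. c j * max (x - (\<Sum>i=l..k. u j i)) 0)"
    unfolding fobj_def by (intro sum_mono)
  also have "\<dots> = (\<Sum>j<K. c j * fobj n x (u j))"
    unfolding fobj_def sum_distrib_left
    by (subst sum.swap, rule sum.cong[OF refl], subst sum.swap, rule refl)
  finally show ?thesis .
qed

lemma conv_hull_elim:
  assumes "w \<in> conv_hull S"
  obtains K :: nat and c :: "nat \<Rightarrow> real" and u
  where "\<forall>j<K. 0 \<le> c j" and "\<forall>j<K. u j \<in> S" and "(\<Sum>j<K. c j) = 1"
    and "w = (\<lambda>i. \<Sum>j<K. c j * u j i)"
  using assms unfolding conv_hull_def by blast

lemma conv_hull_subset_Lambda:
  assumes "S \<subseteq> Lambda n v"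
  shows "conv_hull S \<subseteq> Lambda n v"
proof
  fix w assume "w \<in> conv_hull S"
  then obtain K :: nat and c :: "nat \<Rightarrow> real" and u where c: "\<forall>j<K. 0 \<le> c j" and u: "\<forall>j<K. u j \<in> S"
    and c1: "(\<Sum>j<K. c j) = 1" and w: "w = (\<lambda>i. \<Sum>j<K. c j * u j i)"
    by (rule conv_hull_elim)
  have uL: "\<forall>j<K. u j \<in> Lambda n v"
    using u assms by blast
  have "0 \<le> w i" if "i \<in> {1..n}" for i
    using c uL that unfolding w by (intro sum_nonneg) (auto simp: Lambda_def)
  moreover have "w i = 0" if "i \<notin> {1..n}" for i
    using uL that unfolding w by (intro sum.neutral) (auto simp: Lambda_def)
  moreover have "(\<Sum>i=1..n. w i) = (\<Sum>j<K. c j * (\<Sum>i=1..n. u j i))"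
    unfolding w by (subst sum.swap) (simp add: sum_distrib_left)
  moreover have "\<dots> = (\<Sum>j<K. c j * v)"
    using uL by (intro sum.cong) (auto simp: Lambda_def)
  ultimately show "w \<in> Lambda n v"
    using convex_comb_sum[OF c1] by (simp add: Lambda_def)
qed

lemma fobj_conv_hull_le:
  assumes "\<forall>u\<in>S. fobj n x u \<le> B" and "w \<in> conv_hull S"
  shows "fobj n x w \<le> B"
proof -
  obtain K :: nat and c :: "nat \<Rightarrow> real" and u where c: "\<forall>j<K. 0 \<le> c j" and u: "\<forall>j<K. u j \<in> S"
    and c1: "(\<Sum>j<K. c j) = 1" and w: "w = (\<lambda>i. \<Sum>j<K. c j * u j i)"
    using assms(2) by (rule conv_hull_elim)
  have "fobj n x w \<le> (\<Sum>j<K. c j * fobj n x (u j))"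
    unfolding w using c c1 by (rule fobj_convex_comb_le)
  also have "\<dots> \<le> (\<Sum>j<K. c j * B)"
    using c u assms(1) by (intro sum_mono mult_left_mono) auto
  also have "\<dots> = B"
    by (rule convex_comb_sum[OF c1])
  finally show ?thesis .
qed

theorem mainTheorem2:
  fixes n :: nat and x v :: real
  assumes "n \<ge> 1" and "x > 0" and "0 < v" and "v < real n * x"
  defines "m \<equiv> nat \<lfloor>v / x\<rfloor>"
  defines "r \<equiv> v - real m * x"
  defines "y \<equiv> x - r"
  shows "\<forall>u \<in> conv_hull (Gamma n m y r).
           u \<in> Lambda n v \<and> (\<forall>w \<in> Lambda n v. fobj n x u \<le> fobj n x w)"
proof -
  have "m = grid_cell x 0 v"
    by (simp add: m_def grid_cell_def)
  then have m: "real m * x \<le> v" "v < (real m + 1) * x"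
    using grid_cell_bounds[OF assms(2), of 0 v] assms(3) by simp_all
  have "real m < real n"
    using mult_right_less_imp_less[of "real m" x "real n"] m(1) assms(2,4) by linarith
  then have mn: "m + 1 \<le> n" by simp
  have ry: "0 \<le> y" "0 \<le> r" "y + r = x" "y * real m + r * real (m + 1) = v"
    using m by (simp_all add: r_def y_def algebra_simps)
  have feasible: "conv_hull (Gamma n m y r) \<subseteq> Lambda n v"
    using conv_hull_subset_Lambda Gamma_subset_Lambda[OF mn ry(1,2)] ry(4) by simp
  have optimal: "\<forall>u\<in>Gamma n m y r. fobj n x u \<le> fobj n x w" if "w \<in> Lambda n v" for w
  proof
    fix u assume "u \<in> Gamma n m y r"
    then have "fobj n x u \<le> y * min_equal_pairs n (m + 1) + r * min_equal_pairs n (m + 2)"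
      using fobj_Gamma_le[OF _ mn ry(1,2)] ry(3) by simp
    also have "\<dots> \<le> fobj n x w"
      unfolding y_def r_def by (rule fobj_lower_bound[OF assms(2) m that])
    finally show "fobj n x u \<le> fobj n x w" .
  qed
  show ?thesis
    using feasible fobj_conv_hull_le[OF optimal] by blast
qed

end
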